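(* Let $G$ be a graph and let $S$ be a twin cover of $G$ with $|S|=k$. Let $\alpha$ and $\beta$ be two specification functions for $G$ and let $\sigma$ and $\pi$ be two clean layouts of $G$ that are similar with respect to $S$. If $\sigma$ and $\pi$ both respect $\alpha$ in count and $\beta$ in size, then $\mathcal{I}(\sigma)=\mathcal{I}(\pi)$.
   Context: All graphs are finite, simple and undirected; $n=|V(G)|$. For a layout (linear ordering) $\sigma$ of $V(G)$, $N_L(v,\sigma)$, $N_R(v,\sigma)$ are the neighbours of $v$ before/after $v$; $\mathcal{I}(v,\sigma)=\big||N_L(v,\sigma)|-|N_R(v,\sigma)|\big|$ and $\mathcal{I}(\sigma)=\sum_v\mathcal{I}(v,\sigma)$. A twin cover of $G$ is a set $S\subseteq V(G)$ such that every connected component $X$ of $G-S$ is a set of true twins ($N[u]=N[v]$ for $u,v\in X$); these components are called the cliques of $G-S$. The type of a clique $C$ is $N(v)\cap S$ for $v\in C$. A clique is large if it has more than $k$ vertices, small otherwise. Let $\mathcal{C}=(2^S\times\{0\}\times[k])\cup(2^S\times\{1\}\times\{e,o\})$; the class of a clique $C$ of type $T$ is $(T,1,o)$ if $C$ is large with $|C|$ odd, $(T,1,e)$ if $C$ is large with $|C|$ even, and $(T,0,j)$ if $C$ is small with $|C|=j$. A layout is clean if the vertices of each clique of $G-S$ appear consecutively; in a clean layout $\sigma$, the location of a clique $C$ is $|\{s\in S: s<_\sigma v\}|+1\in[k+1]$ for any $v\in C$. A specification function is a map $\mathcal{C}\times[k+1]\to\{0,1,\dots,n\}$. A clean layout $\sigma$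 respects $\alpha$ in count if for every $j\in[k+1]$ and $\nu\in\mathcal{C}$ the number of cliques of class $\nu$ at location $j$ is $\alpha(\nu,j)$, and respects $\beta$ in size if for every $j,\nu$ the total number of vertices in cliques of class $\nu$ at location $j$ is $\beta(\nu,j)$. Two layouts are similar with respect to $S$ if their restrictions to $S$ are the same ordering. *)

theory Defs
  imports Main
begin

definition graph :: "'a set \<Rightarrow> ('a \<Rightarrow> 'a \<Rightarrow> bool) \<Rightarrow> bool" where
  "graph V E \<longleftrightarrow> finite V \<and> (\<forall>u v. E u v \<longrightarrow> u \<in> V \<and> v \<in> V)
     \<and> (\<forall>u v. E u v \<longrightarrow> E v u) \<and> (\<forall>u. \<not> E u u)"

definition layout :: "'a set \<Rightarrow> 'a list \<Rightarrow> bool" where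
  "layout V \<sigma> \<longleftrightarrow> distinct \<sigma> \<and> set \<sigma> = V"

definition before :: "'a list \<Rightarrow> 'a \<Rightarrow> 'a \<Rightarrow> bool" where
  "before \<sigma> u v \<longleftrightarrow> (\<exists>i j. i < j \<and> j < length \<sigma> \<and> \<sigma> ! i = u \<and> \<sigma> ! j = v)"

definition NL :: "('a \<Rightarrow> 'a \<Rightarrow> bool) \<Rightarrow> 'a list \<Rightarrow> 'a \<Rightarrow> 'a set" where
  "NL E \<sigma> v = {u. E v u \<and> before \<sigma> u v}"

definition NR :: "('a \<Rightarrow> 'a \<Rightarrow> bool) \<Rightarrow> 'a list \<Rightarrow> 'a \<Rightarrow> 'a set" where
  "NR E \<sigma> v = {u. E v u \<and> before \<sigma> v u}"

definition imb_vertex :: "('a \<Rightarrow> 'a \<Rightarrow> bool) \<Rightarrow> 'a list \<Rightarrow> 'a \<Rightarrow> nat" where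
  "imb_vertex E \<sigma> v = nat \<bar>int (card (NL E \<sigma> v)) - int (card (NR E \<sigma> v))\<bar>"

definition imbalance :: "'a set \<Rightarrow> ('a \<Rightarrow> 'a \<Rightarrow> bool) \<Rightarrow> 'a list \<Rightarrow> nat" where
  "imbalance V E \<sigma> = (\<Sum>v\<in>V. imb_vertex E \<sigma> v)"

definition edge_minus :: "'a set \<Rightarrow> ('a \<Rightarrow> 'a \<Rightarrow> bool) \<Rightarrow> 'a set \<Rightarrow> 'a \<Rightarrow> 'a \<Rightarrow> bool" where
  "edge_minus V E S u v \<longleftrightarrow> u \<in> V - S \<and> v \<in> V - S \<and> E u v"

definition cliques :: "'a set \<Rightarrow> ('a \<Rightarrow> 'a \<Rightarrow> bool) \<Rightarrow> 'a set \<Rightarrow> 'a set set" where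
  "cliques V E S = (\<lambda>v. {u. (edge_minus V E S)\<^sup>*\<^sup>* v u}) ` (V - S)"

definition closed_nbhd :: "('a \<Rightarrow> 'a \<Rightarrow> bool) \<Rightarrow> 'a \<Rightarrow> 'a set" where
  "closed_nbhd E v = insert v {u. E v u}"

definition twin_cover :: "'a set \<Rightarrow> ('a \<Rightarrow> 'a \<Rightarrow> bool) \<Rightarrow> 'a set \<Rightarrow> bool" where
  "twin_cover V E S \<longleftrightarrow> S \<subseteq> V \<and>
     (\<forall>X \<in> cliques V E S. \<forall>u\<in>X. \<forall>v\<in>X. closed_nbhd E u = closed_nbhd E v)"

definition clique_type :: "('a \<Rightarrow> 'a \<Rightarrow> bool) \<Rightarrow> 'a set \<Rightarrow> 'a set \<Rightarrow> 'a set" where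
  "clique_type E S C = {s \<in> S. E (SOME v. v \<in> C) s}"

text \<open>Classes: Small T j is (T,0,j); Large T b is (T,1,o) if b, (T,1,e) otherwise.\<close>
datatype 'a cls = Small "'a set" nat | Large "'a set" bool

definition classes :: "'a set \<Rightarrow> nat \<Rightarrow> 'a cls set" where
  "classes S k = {Small T j | T j. T \<subseteq> S \<and> j \<in> {1..k}} \<union> {Large T b | T b. T \<subseteq> S}"

definition clique_class :: "('a \<Rightarrow> 'a \<Rightarrow> bool) \<Rightarrow> 'a set \<Rightarrow> nat \<Rightarrow> 'a set \<Rightarrow> 'a cls" where
  "clique_class E S k C =
     (if card C > k then Large (clique_type E S C) (odd (card C))
      else Small (clique_type E S C) (card C))"

definition clean :: "'a set \<Rightarrow> ('a \<Rightarrow> 'a \<Rightarrow> bool) \<Rightarrow> 'a set \<Rightarrow> 'a list \<Rightarrow> bool" where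
  "clean V E S \<sigma> \<longleftrightarrow> layout V \<sigma> \<and>
     (\<forall>C \<in> cliques V E S. \<forall>u\<in>C. \<forall>w\<in>C. \<forall>x. before \<sigma> u x \<and> before \<sigma> x w \<longrightarrow> x \<in> C)"

definition location :: "'a set \<Rightarrow> 'a list \<Rightarrow> 'a set \<Rightarrow> nat" where
  "location S \<sigma> C = card {s \<in> S. before \<sigma> s (SOME v. v \<in> C)} + 1"

definition spec_fun :: "'a set \<Rightarrow> 'a set \<Rightarrow> nat \<Rightarrow> ('a cls \<Rightarrow> nat \<Rightarrow> nat) \<Rightarrow> bool" where
  "spec_fun V S k \<alpha> \<longleftrightarrow> (\<forall>\<nu>\<in>classes S k. \<forall>j\<in>{1..k+1}. \<alpha> \<nu> j \<le> card V)"

definition cliques_at :: "'a set \<Rightarrow> ('a \<Rightarrow> 'a \<Rightarrow> bool) \<Rightarrow> 'a set \<Rightarrow> nat \<Rightarrow> 'a list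
     \<Rightarrow> 'a cls \<Rightarrow> nat \<Rightarrow> 'a set set" where
  "cliques_at V E S k \<sigma> \<nu> j =
     {C \<in> cliques V E S. clique_class E S k C = \<nu> \<and> location S \<sigma> C = j}"

definition respects_count where
  "respects_count V E S k \<sigma> \<alpha> \<longleftrightarrow>
     (\<forall>j\<in>{1..k+1}. \<forall>\<nu>\<in>classes S k. card (cliques_at V E S k \<sigma> \<nu> j) = \<alpha> \<nu> j)"

definition respects_size where
  "respects_size V E S k \<sigma> \<beta> \<longleftrightarrow>
     (\<forall>j\<in>{1..k+1}. \<forall>\<nu>\<in>classes S k. (\<Sum>C\<in>cliques_at V E S k \<sigma> \<nu> j. card C) = \<beta> \<nu> j)"

definition similar :: "'a set \<Rightarrow> 'a list \<Rightarrow> 'a list \<Rightarrow> bool" where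
  "similar S \<sigma> \<pi> \<longleftrightarrow> filter (\<lambda>x. x \<in> S) \<sigma> = filter (\<lambda>x. x \<in> S) \<pi>"

end

theory Submission
  imports Defs
begin

(* In a clean layout all vertices of a clique C of type T see the same cover vertices on each
   side: with P the set of the first (location - 1) vertices of the order on S, the neighbours
   of C in P lie to the left and those in S - P to the right. Hence the vertex of rank p in C
   has imbalance |2p - |C| + 1 + D| with D = |T \<inter> P| - |T - P| determined by T and the
   location, and C contributes f(|C|, D) = sum of these terms for p < |C|. For a small clique
   this depends only on its class and location. For a large clique |C| > k >= |D|, and the
   closed form 2 f(|C|, D) = |C|^2 + D^2 - [|C| + D odd] splits into a term independent of the
   layout and a term depending only on D and the parity of |C|. Counting cliques per class and
   location (alpha), the clique vertices therefore contribute the same in similar layouts. A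
   cover vertex s is adjacent, outside S, to all vertices of the cliques whose type contains s,
   and those located after s lie to its left; summing their sizes per class and location (beta)
   shows its imbalance is the same too. *)

lemma before_iff_append:
  "before xs u v \<longleftrightarrow> (\<exists>ys zs. xs = ys @ zs \<and> u \<in> set ys \<and> v \<in> set zs)"
proof
  assume "before xs u v"
  then obtain i j where ij: "i < j" "j < length xs" "xs ! i = u" "xs ! j = v"
    unfolding before_def by blast
  then have "u \<in> set (take j xs)" "v \<in> set (drop j xs)"
    by (auto simp: in_set_conv_nth intro: exI[of _ i] exI[of _ 0])
  then show "\<exists>ys zs. xs = ys @ zs \<and> u \<in> set ys \<and> v \<in> set zs"
    by (metis append_take_drop_id)
next
  assume "\<exists>ys zs. xs = ys @ zs \<and> u \<in> set ys \<and> v \<in> set zs"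
  then obtain ys zs i j where "xs = ys @ zs" "i < length ys" "ys ! i = u" "j < length zs" "zs ! j = v"
    by (metis in_set_conv_nth)
  then show "before xs u v"
    unfolding before_def by (intro exI[of _ i] exI[of _ "length ys + j"]) (auto simp: nth_append)
qed

lemma before_in_set: "before xs u v \<Longrightarrow> u \<in> set xs \<and> v \<in> set xs"
  unfolding before_def by auto

lemma before_trans:
  assumes "distinct xs" "before xs u v" "before xs v w"
  shows "before xs u w"
proof -
  obtain i j j' l where "i < j" "j < length xs" "xs ! i = u" "xs ! j = v"
    and "j' < l" "l < length xs" "xs ! j' = v" "xs ! l = w"
    using assms(2,3) unfolding before_def by blast
  moreover from this have "j = j'"
    using assms(1) nth_eq_iff_index_eq by fastforce
  ultimately show ?thesis
    unfolding before_def by (intro exI[of _ i] exI[of _ l]) auto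
qed

lemma before_irrefl: "distinct xs \<Longrightarrow> \<not> before xs u u"
  unfolding before_def using nth_eq_iff_index_eq by fastforce

lemma before_asym: "distinct xs \<Longrightarrow> before xs u v \<Longrightarrow> \<not> before xs v u"
  using before_trans before_irrefl by metis

lemma before_total:
  assumes "u \<in> set xs" "v \<in> set xs" "u \<noteq> v"
  shows "before xs u v \<or> before xs v u"
proof -
  obtain i j where "i < length xs" "xs ! i = u" "j < length xs" "xs ! j = v"
    using assms(1,2) by (metis in_set_conv_nth)
  moreover have "i \<noteq> j"
    using calculation assms(3) by blast
  ultimately show ?thesis
    unfolding before_def by (metis linorder_neqE_nat)
qed

lemma before_filter:
  assumes "before xs u v" "P u" "P v"
  shows "before (filter P xs) u v"
proof -
  obtain ys zs where "xs = ys @ zs" "u \<in> set ys" "v \<in> set zs"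
    using assms(1) unfolding before_iff_append by blast
  then show ?thesis
    unfolding before_iff_append using assms(2,3)
    by (intro exI[of _ "filter P ys"] exI[of _ "filter P zs"]) auto
qed

lemma before_filter_iff:
  assumes "distinct xs" "P u" "P v"
  shows "before (filter P xs) u v \<longleftrightarrow> before xs u v"
proof
  assume before_in_filter: "before (filter P xs) u v"
  have "distinct (filter P xs)"
    using assms(1) by simp
  then have "u \<noteq> v" "\<not> before (filter P xs) v u"
    using before_in_filter before_irrefl before_asym by metis+
  moreover have "u \<in> set xs" "v \<in> set xs"
    using before_in_set[OF before_in_filter] by auto
  ultimately show "before xs u v"
    using before_total before_filter assms(2,3) by metis
next
  assume "before xs u v"
  then show "before (filter P xs) u v"
    using before_filter assms(2,3) by metis
qed

lemma before_split_self_iff: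
  assumes "distinct (ys @ w # zs)"
  shows "before (ys @ w # zs) u w \<longleftrightarrow> u \<in> set ys"
proof
  assume "before (ys @ w # zs) u w"
  then obtain i j where "i < j" "j < length (ys @ w # zs)" "(ys @ w # zs) ! i = u"
      "(ys @ w # zs) ! j = w"
    unfolding before_def by blast
  moreover from this have "j = length ys"
    using assms nth_eq_iff_index_eq[OF assms, of j "length ys"] by simp
  ultimately show "u \<in> set ys"
    by (auto simp: nth_append)
next
  assume "u \<in> set ys"
  then show "before (ys @ w # zs) u w"
    unfolding before_iff_append by (intro exI[of _ ys] exI[of _ "w # zs"]) simp
qed

lemma filter_before_eq_set_take:
  assumes "distinct xs" "w \<in> set xs"
  shows "{u. P u \<and> before xs u w} = set (take (card {u. P u \<and> before xs u w}) (filter P xs))"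
proof -
  obtain ys zs where xs: "xs = ys @ w # zs"
    using assms(2) split_list by metis
  have "{u. P u \<and> before xs u w} = set (filter P ys)"
    using before_split_self_iff[of ys w zs] assms(1) unfolding xs by auto
  moreover have "card (set (filter P ys)) = length (filter P ys)"
    using assms(1) unfolding xs by (intro distinct_card) simp
  ultimately show ?thesis
    unfolding xs by simp
qed

lemma card_before_less:
  assumes "distinct xs" "finite C" "u \<in> C" "before xs u v"
  shows "card {x\<in>C. before xs x u} < card {x\<in>C. before xs x v}"
proof (rule psubset_card_mono)
  show "{x\<in>C. before xs x u} \<subset> {x\<in>C. before xs x v}"
    using assms before_trans before_irrefl by fastforce
qed (use assms(2) in simp)

lemma bij_betw_card_before:
  assumes "distinct xs" "finite C" "C \<subseteq> set xs"
  shows "bij_betw (\<lambda>v. card {u\<in>C. before xs u v}) C {..<card C}"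
proof -
  define rank where "rank v = card {u\<in>C. before xs u v}" for v
  have "inj_on rank C"
  proof
    fix u v assume uv: "u \<in> C" "v \<in> C" "rank u = rank v"
    show "u = v"
    proof (rule ccontr)
      assume "u \<noteq> v"
      then consider "before xs u v" | "before xs v u"
        using before_total[of u xs v] uv assms(3) by blast
      then show False
      proof cases
        case 1
        then have "rank u < rank v"
          unfolding rank_def by (rule card_before_less[OF assms(1,2) uv(1)])
        then show False
          using uv(3) by simp
      next
        case 2
        then have "rank v < rank u"
          unfolding rank_def by (rule card_before_less[OF assms(1,2) uv(2)])
        then show False
          using uv(3) by simp
      qed
    qed
  qed
  moreover have "rank ` C \<subseteq> {..<card C}"
  proof (rule image_subsetI)
    fix v assume "v \<in> C"
    have "rank v \<le> card (C - {v})"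
      unfolding rank_def using assms(2) before_irrefl[OF assms(1)] by (intro card_mono) blast+
    also have "\<dots> < card C"
      using assms(2) \<open>v \<in> C\<close> by (rule card_Diff1_less)
    finally show "rank v \<in> {..<card C}"
      by simp
  qed
  moreover have "card (rank ` C) = card {..<card C}"
    using card_image[OF \<open>inj_on rank C\<close>] by simp
  ultimately have "rank ` C = {..<card C}"
    using card_subset_eq[of "{..<card C}" "rank ` C"] by blast
  then show ?thesis
    using \<open>inj_on rank C\<close> unfolding bij_betw_def rank_def by simp
qed

lemma card_before_add_card_after:
  assumes "distinct xs" "finite C" "C \<subseteq> set xs" "v \<in> C"
  shows "card {u\<in>C. before xs u v} + card {u\<in>C. before xs v u} + 1 = card C"
proof -
  have "C = insert v ({u\<in>C. before xs u v} \<union> {u\<in>C. before xs v u})"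
    using before_total[of _ xs v] assms(3,4) by auto
  moreover have "v \<notin> {u\<in>C. before xs u v} \<union> {u\<in>C. before xs v u}"
    using before_irrefl[OF assms(1)] by simp
  moreover have "{u\<in>C. before xs u v} \<inter> {u\<in>C. before xs v u} = {}"
    using before_asym[OF assms(1)] by blast
  ultimately have "card C = Suc (card {u\<in>C. before xs u v} + card {u\<in>C. before xs v u})"
    using assms(2) by (metis card_Un_disjoint card_insert_disjoint finite_Un finite_insert)
  then show ?thesis
    by simp
qed

definition cover_prefix :: "'a list \<Rightarrow> nat \<Rightarrow> 'a set" where
  "cover_prefix L j = set (take (j - 1) L)"

definition type_balance :: "'a list \<Rightarrow> 'a set \<Rightarrow> nat \<Rightarrow> int" where
  "type_balance L T j = int (card (T \<inter> cover_prefix L j)) - int (card (T - cover_prefix L j))"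

definition clique_imbalance :: "nat \<Rightarrow> int \<Rightarrow> int" where
  "clique_imbalance c d = (\<Sum>p<c. \<bar>2 * int p - int c + 1 + d\<bar>)"

lemma clique_imbalance_Suc_last:
  "clique_imbalance (Suc c) d = clique_imbalance c (d - 1) + \<bar>int c + d\<bar>"
  unfolding clique_imbalance_def by (simp add: algebra_simps)

lemma clique_imbalance_Suc_first:
  "clique_imbalance (Suc c) d = \<bar>d - int c\<bar> + clique_imbalance c (d + 1)"
  unfolding clique_imbalance_def sum.lessThan_Suc_shift by (simp add: algebra_simps)

lemma clique_imbalance_closed_form:
  "\<bar>d\<bar> \<le> int c \<Longrightarrow> 2 * clique_imbalance c d = int c ^ 2 + d ^ 2 - of_bool (odd (int c + d))"
proof (induction c arbitrary: d)
  case 0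
  then show ?case
    unfolding clique_imbalance_def by simp
next
  case (Suc c)
  consider "0 < d \<or> (d = 0 \<and> 0 < c)" | "d < 0" | "d = 0" "c = 0"
    by linarith
  then show ?case
  proof cases
    case 1
    then have "\<bar>d - 1\<bar> \<le> int c"
      using Suc.prems by auto
    moreover have "odd (int c + (d - 1)) \<longleftrightarrow> odd (int (Suc c) + d)"
      by presburger
    ultimately have "2 * clique_imbalance c (d - 1) =
        int c ^ 2 + (d - 1) ^ 2 - of_bool (odd (int (Suc c) + d))"
      using Suc.IH[of "d - 1"] by simp
    moreover have "\<bar>int c + d\<bar> = int c + d"
      using 1 by auto
    ultimately show ?thesis
      unfolding clique_imbalance_Suc_last by (simp add: power2_eq_square algebra_simps)
  next
    case 2
    then have "\<bar>d + 1\<bar> \<le> int c"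
      using Suc.prems by auto
    moreover have "odd (int c + (d + 1)) \<longleftrightarrow> odd (int (Suc c) + d)"
      by presburger
    ultimately have "2 * clique_imbalance c (d + 1) =
        int c ^ 2 + (d + 1) ^ 2 - of_bool (odd (int (Suc c) + d))"
      using Suc.IH[of "d + 1"] by simp
    moreover have "\<bar>d - int c\<bar> = int c - d"
      using 2 by auto
    ultimately show ?thesis
      unfolding clique_imbalance_Suc_first by (simp add: power2_eq_square algebra_simps)
  next
    case 3
    then show ?thesis
      unfolding clique_imbalance_def by simp
  qed
qed

fun class_type :: "'a cls \<Rightarrow> 'a set" where
  "class_type (Small T c) = T"
| "class_type (Large T b) = T"

lemma class_type_clique_class [simp]: "class_type (clique_class E S k C) = clique_type E S C"
  unfolding clique_class_def by simp

text \<open>A large clique has more than k \<ge> |D| vertices, so by the closed form its excess over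
  a clique of the same size with D = 0 depends on the size only through its parity.\<close>
definition class_excess :: "'a list \<Rightarrow> 'a cls \<Rightarrow> nat \<Rightarrow> int" where
  "class_excess L \<nu> j = (case \<nu> of
      Small T c \<Rightarrow> 2 * (clique_imbalance c (type_balance L T j) - clique_imbalance c 0)
    | Large T b \<Rightarrow> (type_balance L T j)\<^sup>2 - of_bool (b \<noteq> odd (type_balance L T j)) + of_bool b)"

lemma abs_type_balance_le: "finite T \<Longrightarrow> \<bar>type_balance L T j\<bar> \<le> int (card T)"
  unfolding type_balance_def using card_Int_Diff[of T "cover_prefix L j"] by simp

lemma twice_clique_imbalance_eq:
  assumes "finite S"
  shows "2 * clique_imbalance (card C) (type_balance L (clique_type E S C) j) =
    2 * clique_imbalance (card C) 0 + class_excess L (clique_class E S (card S) C) j"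
proof (cases "card S < card C")
  case True
  define D where "D = type_balance L (clique_type E S C) j"
  have "clique_type E S C \<subseteq> S"
    unfolding clique_type_def by blast
  then have "\<bar>D\<bar> \<le> int (card S)"
    unfolding D_def using abs_type_balance_le[of "clique_type E S C"] assms card_mono
    by (metis finite_subset of_nat_le_iff order_trans)
  then have "2 * clique_imbalance (card C) D = int (card C) ^ 2 + D ^ 2 - of_bool (odd (int (card C) + D))"
    using True by (intro clique_imbalance_closed_form) simp
  moreover have "2 * clique_imbalance (card C) 0 = int (card C) ^ 2 - of_bool (odd (card C))"
    using clique_imbalance_closed_form[of 0 "card C"] by simp
  moreover have "class_excess L (clique_class E S (card S) C) j =
      D ^ 2 - of_bool (odd (card C) \<noteq> odd D) + of_bool (odd (card C))"
    unfolding clique_class_def class_excess_def D_def using True by simp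
  moreover have "odd (int (card C) + D) \<longleftrightarrow> odd (card C) \<noteq> odd D"
    by simp
  ultimately show ?thesis
    unfolding D_def[symmetric] by (cases "odd (card C)"; cases "odd D") simp_all
next
  case False
  then show ?thesis
    unfolding clique_class_def class_excess_def by simp
qed

lemma finite_classes: "finite S \<Longrightarrow> finite (classes S k)"
proof -
  assume "finite S"
  have "classes S k \<subseteq> case_prod Small ` (Pow S \<times> {1..k}) \<union> case_prod Large ` (Pow S \<times> UNIV)"
    unfolding classes_def by auto
  then show ?thesis
    using \<open>finite S\<close> finite_subset by fastforce
qed

lemma clique_class_in_classes:
  "finite C \<Longrightarrow> C \<noteq> {} \<Longrightarrow> clique_class E S k C \<in> classes S k"
  unfolding clique_class_def classes_def clique_type_def by (auto simp: Suc_le_eq card_gt_0_iff)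

lemma location_in_range: "finite S \<Longrightarrow> location S \<sigma> C \<in> {1..card S + 1}"
  unfolding location_def by (simp add: card_mono)

locale twin_cover_graph =
  fixes V :: "'a set" and E :: "'a \<Rightarrow> 'a \<Rightarrow> bool" and S :: "'a set"
  assumes graph: "graph V E" and twin_cover: "twin_cover V E S"
begin

lemma finite_V: "finite V"
  using graph unfolding graph_def by simp

lemma S_subset_V: "S \<subseteq> V"
  using twin_cover unfolding twin_cover_def by simp

lemma finite_S: "finite S"
  using finite_V S_subset_V finite_subset by blast

lemma edge_in_V: "E u v \<Longrightarrow> u \<in> V \<and> v \<in> V"
  using graph unfolding graph_def by simp

lemma edge_sym: "E u v \<Longrightarrow> E v u"
  using graph unfolding graph_def by simp

lemma edge_irrefl: "\<not> E v v"
  using graph unfolding graph_def by simp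

lemma clique_eq_component:
  assumes "C \<in> cliques V E S" "x \<in> C"
  shows "C = {u. (edge_minus V E S)\<^sup>*\<^sup>* x u}"
proof -
  have "symp (edge_minus V E S)"
    using edge_sym unfolding edge_minus_def symp_def by blast
  then have equiv: "equivp (edge_minus V E S)\<^sup>*\<^sup>*"
    by (rule equivp_rtranclp)
  obtain w where C: "C = {u. (edge_minus V E S)\<^sup>*\<^sup>* w u}"
    using assms(1) unfolding cliques_def by blast
  then have "(edge_minus V E S)\<^sup>*\<^sup>* w x" "(edge_minus V E S)\<^sup>*\<^sup>* x w"
    using assms(2) equivp_symp[OF equiv] by auto
  then show ?thesis
    unfolding C using equivp_transp[OF equiv] by blast
qed

lemma clique_subset: "C \<in> cliques V E S \<Longrightarrow> C \<subseteq> V - S"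
proof
  fix u assume "C \<in> cliques V E S" "u \<in> C"
  then obtain w where path: "(edge_minus V E S)\<^sup>*\<^sup>* w u" and "w \<in> V - S"
    unfolding cliques_def by blast
  from path show "u \<in> V - S"
    by (cases rule: rtranclp.cases) (use \<open>w \<in> V - S\<close> in \<open>auto simp: edge_minus_def\<close>)
qed

lemma clique_nonempty: "C \<in> cliques V E S \<Longrightarrow> C \<noteq> {}"
  unfolding cliques_def by auto

lemma finite_clique: "C \<in> cliques V E S \<Longrightarrow> finite C"
  using clique_subset finite_V finite_subset by blast

lemma finite_cliques: "finite (cliques V E S)"
  unfolding cliques_def using finite_V by simp

lemma cliques_disjoint: "pairwise disjnt (cliques V E S)"
  unfolding pairwise_def disjnt_def using clique_eq_component by blast

lemma Union_cliques: "\<Union>(cliques V E S) = V - S"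
proof
  show "\<Union>(cliques V E S) \<subseteq> V - S"
    using clique_subset by blast
  show "V - S \<subseteq> \<Union>(cliques V E S)"
  proof
    fix v assume "v \<in> V - S"
    then have "{u. (edge_minus V E S)\<^sup>*\<^sup>* v u} \<in> cliques V E S"
      unfolding cliques_def by blast
    then show "v \<in> \<Union>(cliques V E S)"
      by blast
  qed
qed

lemma clique_edge_cover_iff:
  assumes "C \<in> cliques V E S" "v \<in> C" "s \<in> S"
  shows "E v s \<longleftrightarrow> s \<in> clique_type E S C"
proof -
  have rep: "(SOME v. v \<in> C) \<in> C"
    using assms(2) by (rule someI)
  then have "closed_nbhd E v = closed_nbhd E (SOME v. v \<in> C)"
    using twin_cover assms(1,2) unfolding twin_cover_def by blast
  moreover have "s \<noteq> v" "s \<noteq> (SOME v. v \<in> C)"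
    using clique_subset[OF assms(1)] assms(2,3) rep by auto
  ultimately show ?thesis
    unfolding clique_type_def closed_nbhd_def using assms(3) by blast
qed

lemma clique_neighbours:
  assumes "C \<in> cliques V E S" "v \<in> C"
  shows "{u. E v u} = (C - {v}) \<union> clique_type E S C"
proof (intro equalityI subsetI)
  fix u assume "u \<in> {u. E v u}"
  then have edge: "E v u" by simp
  show "u \<in> (C - {v}) \<union> clique_type E S C"
  proof (cases "u \<in> S")
    case True
    then show ?thesis
      using clique_edge_cover_iff[OF assms True] edge by simp
  next
    case False
    then have "edge_minus V E S v u"
      using edge edge_in_V clique_subset[OF assms(1)] assms(2) unfolding edge_minus_def by blast
    then have "u \<in> C"
      using clique_eq_component[OF assms] by simp
    then show ?thesis
      using edge edge_irrefl by auto
  qed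
next
  fix u assume u: "u \<in> (C - {v}) \<union> clique_type E S C"
  show "u \<in> {u. E v u}"
  proof (cases "u \<in> C")
    case True
    then have "closed_nbhd E u = closed_nbhd E v"
      using twin_cover assms unfolding twin_cover_def by blast
    moreover have "u \<noteq> v"
      using u True clique_subset[OF assms(1)] unfolding clique_type_def by auto
    ultimately show ?thesis
      unfolding closed_nbhd_def by blast
  next
    case False
    then have "u \<in> S" "u \<in> clique_type E S C"
      using u unfolding clique_type_def by auto
    then show ?thesis
      using clique_edge_cover_iff[OF assms] by simp
  qed
qed

lemma cover_vertex_neighbours:
  assumes "s \<in> S"
  shows "{u. E s u} = {u\<in>S. E s u} \<union> \<Union>{C \<in> cliques V E S. s \<in> clique_type E S C}"
proof (intro equalityI subsetI)
  fix u assume "u \<in> {u. E s u}"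
  then have edge: "E s u" by simp
  show "u \<in> {u\<in>S. E s u} \<union> \<Union>{C \<in> cliques V E S. s \<in> clique_type E S C}"
  proof (cases "u \<in> S")
    case False
    then obtain C where C: "C \<in> cliques V E S" "u \<in> C"
      using edge edge_in_V Union_cliques by blast
    then have "s \<in> clique_type E S C"
      using clique_edge_cover_iff[OF C assms] edge_sym[OF edge] by simp
    then show ?thesis
      using C by blast
  qed (use edge in simp)
next
  fix u assume "u \<in> {u\<in>S. E s u} \<union> \<Union>{C \<in> cliques V E S. s \<in> clique_type E S C}"
  then show "u \<in> {u. E s u}"
    using clique_edge_cover_iff[OF _ _ assms] edge_sym by blast
qed

lemma clean_distinct: "clean V E S \<sigma> \<Longrightarrow> distinct \<sigma>"
  unfolding clean_def layout_def by simp

lemma clean_set: "clean V E S \<sigma> \<Longrightarrow> set \<sigma> = V"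
  unfolding clean_def layout_def by simp

lemma clean_before_clique:
  assumes "clean V E S \<sigma>" "C \<in> cliques V E S" "v \<in> C" "w \<in> C" "x \<notin> C"
  shows "before \<sigma> x v \<longleftrightarrow> before \<sigma> x w"
proof -
  have convex: "\<forall>u\<in>C. \<forall>w\<in>C. \<forall>x. before \<sigma> u x \<and> before \<sigma> x w \<longrightarrow> x \<in> C"
    using assms(1,2) unfolding clean_def by blast
  have "before \<sigma> x w" if "v \<in> C" "w \<in> C" "before \<sigma> x v" for v w
  proof -
    have "x \<in> set \<sigma>" "w \<in> set \<sigma>" "x \<noteq> w"
      using before_in_set[OF \<open>before \<sigma> x v\<close>] clean_set[OF assms(1)] clique_subset[OF assms(2)]
        \<open>w \<in> C\<close> assms(5) by auto
    moreover have "\<not> before \<sigma> w x"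
      using convex that assms(5) by blast
    ultimately show ?thesis
      using before_total[of x \<sigma> w] by blast
  qed
  then show ?thesis
    using assms(3,4) by blast
qed

definition cover_before :: "'a list \<Rightarrow> 'a set \<Rightarrow> 'a set" where
  "cover_before \<sigma> C = cover_prefix (filter (\<lambda>x. x \<in> S) \<sigma>) (location S \<sigma> C)"

lemma cover_before_eq:
  assumes "clean V E S \<sigma>" "C \<in> cliques V E S"
  shows "cover_before \<sigma> C = {s\<in>S. before \<sigma> s (SOME v. v \<in> C)}"
proof -
  have "(SOME v. v \<in> C) \<in> set \<sigma>"
    using clean_set[OF assms(1)] clique_subset[OF assms(2)] clique_nonempty[OF assms(2)]
    by (metis DiffD1 ex_in_conv someI_ex subsetD)
  then show ?thesis
    unfolding cover_before_def cover_prefix_def location_def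
    using filter_before_eq_set_take[OF clean_distinct[OF assms(1)], of "SOME v. v \<in> C" "\<lambda>x. x \<in> S"]
    by simp
qed

lemma cover_before_clique_iff:
  assumes "clean V E S \<sigma>" "C \<in> cliques V E S" "v \<in> C" "s \<in> S"
  shows "before \<sigma> s v \<longleftrightarrow> s \<in> cover_before \<sigma> C"
proof -
  have "(SOME v. v \<in> C) \<in> C" "s \<notin> C"
    using assms(3,4) clique_subset[OF assms(2)] by (auto intro: someI)
  then show ?thesis
    unfolding cover_before_eq[OF assms(1,2)]
    using clean_before_clique[OF assms(1,2,3)] assms(4) by simp
qed

lemma clique_before_cover_iff:
  assumes "clean V E S \<sigma>" "C \<in> cliques V E S" "v \<in> C" "s \<in> S"
  shows "before \<sigma> v s \<longleftrightarrow> s \<notin> cover_before \<sigma> C"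
proof -
  have "s \<noteq> v" "s \<in> set \<sigma>" "v \<in> set \<sigma>"
    using clean_set[OF assms(1)] clique_subset[OF assms(2)] S_subset_V assms(3,4) by auto
  then have "before \<sigma> v s \<longleftrightarrow> \<not> before \<sigma> s v"
    using before_total before_asym[OF clean_distinct[OF assms(1)]] by metis
  then show ?thesis
    using cover_before_clique_iff[OF assms] by simp
qed

lemma card_NL_clique_vertex:
  assumes "clean V E S \<sigma>" "C \<in> cliques V E S" "v \<in> C"
  shows "card (NL E \<sigma> v) =
    card {u\<in>C. before \<sigma> u v} + card (clique_type E S C \<inter> cover_before \<sigma> C)"
proof -
  have eq: "NL E \<sigma> v = {u\<in>C. before \<sigma> u v} \<union> (clique_type E S C \<inter> cover_before \<sigma> C)"
    unfolding NL_def using clique_neighbours[OF assms(2,3)] cover_before_clique_iff[OF assms]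
      before_irrefl[OF clean_distinct[OF assms(1)]]
    by (auto simp: clique_type_def)
  moreover have "clique_type E S C \<subseteq> S" "C \<inter> S = {}"
    using clique_subset[OF assms(2)] by (auto simp: clique_type_def)
  then have "finite (clique_type E S C \<inter> cover_before \<sigma> C)"
    "{u\<in>C. before \<sigma> u v} \<inter> (clique_type E S C \<inter> cover_before \<sigma> C) = {}"
    using finite_S finite_subset by blast+
  ultimately show ?thesis
    using finite_clique[OF assms(2)] by (simp add: card_Un_disjoint)
qed

lemma card_NR_clique_vertex:
  assumes "clean V E S \<sigma>" "C \<in> cliques V E S" "v \<in> C"
  shows "card (NR E \<sigma> v) =
    card {u\<in>C. before \<sigma> v u} + card (clique_type E S C - cover_before \<sigma> C)"
proof -
  have eq: "NR E \<sigma> v = {u\<in>C. before \<sigma> v u} \<union> (clique_type E S C - cover_before \<sigma> C)"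
    unfolding NR_def using clique_neighbours[OF assms(2,3)] clique_before_cover_iff[OF assms]
      before_irrefl[OF clean_distinct[OF assms(1)]]
    by (auto simp: clique_type_def)
  moreover have "clique_type E S C \<subseteq> S" "C \<inter> S = {}"
    using clique_subset[OF assms(2)] by (auto simp: clique_type_def)
  then have "finite (clique_type E S C - cover_before \<sigma> C)"
    "{u\<in>C. before \<sigma> v u} \<inter> (clique_type E S C - cover_before \<sigma> C) = {}"
    using finite_S finite_subset by blast+
  ultimately show ?thesis
    using finite_clique[OF assms(2)] by (simp add: card_Un_disjoint)
qed

text \<open>With T the type of C and P = cover_before \<sigma> C, the vertex of rank p in C has
  p + |T \<inter> P| neighbours on its left and |C| - 1 - p + |T - P| on its right.\<close>
lemma sum_imb_vertex_clique:
  assumes "clean V E S \<sigma>" "C \<in> cliques V E S"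
  shows "(\<Sum>v\<in>C. int (imb_vertex E \<sigma> v)) = clique_imbalance (card C)
    (type_balance (filter (\<lambda>x. x \<in> S) \<sigma>) (clique_type E S C) (location S \<sigma> C))"
proof -
  define D where "D = type_balance (filter (\<lambda>x. x \<in> S) \<sigma>) (clique_type E S C) (location S \<sigma> C)"
  define rank where "rank v = card {u\<in>C. before \<sigma> u v}" for v
  have C: "finite C" "C \<subseteq> set \<sigma>"
    using finite_clique[OF assms(2)] clique_subset[OF assms(2)] clean_set[OF assms(1)] by auto
  have imb_rank: "int (imb_vertex E \<sigma> v) = \<bar>2 * int (rank v) - int (card C) + 1 + D\<bar>"
    if "v \<in> C" for v
  proof -
    have "int (card (NL E \<sigma> v)) - int (card (NR E \<sigma> v)) = 2 * int (rank v) - int (card C) + 1 + D"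
      using card_NL_clique_vertex[OF assms that] card_NR_clique_vertex[OF assms that]
        card_before_add_card_after[OF clean_distinct[OF assms(1)] C that]
      unfolding D_def type_balance_def cover_before_def rank_def by linarith
    then show ?thesis
      unfolding imb_vertex_def by simp
  qed
  have "(\<Sum>v\<in>C. int (imb_vertex E \<sigma> v)) = (\<Sum>v\<in>C. \<bar>2 * int (rank v) - int (card C) + 1 + D\<bar>)"
    using imb_rank by (rule sum.cong[OF refl])
  also have "\<dots> = (\<Sum>p<card C. \<bar>2 * int p - int (card C) + 1 + D\<bar>)"
    using sum.reindex_bij_betw[OF bij_betw_card_before[OF clean_distinct[OF assms(1)] C],
        of "\<lambda>p. \<bar>2 * int p - int (card C) + 1 + D\<bar>"]
    unfolding rank_def .
  finally show ?thesis
    unfolding clique_imbalance_def D_def by simp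
qed

lemma sum_cliques_by_class_location:
  "(\<Sum>C\<in>cliques V E S. h C) =
    (\<Sum>\<nu>\<in>classes S (card S). \<Sum>j\<in>{1..card S + 1}. \<Sum>C\<in>cliques_at V E S (card S) \<sigma> \<nu> j. h C)"
proof -
  define key where "key C = (clique_class E S (card S) C, location S \<sigma> C)" for C
  have "key C \<in> classes S (card S) \<times> {1..card S + 1}" if "C \<in> cliques V E S" for C
    unfolding key_def using location_in_range[OF finite_S]
      clique_class_in_classes[OF finite_clique[OF that] clique_nonempty[OF that]] by simp
  then have "(\<Sum>C\<in>cliques V E S. h C) =
      (\<Sum>(\<nu>, j)\<in>classes S (card S) \<times> {1..card S + 1}. \<Sum>C\<in>{C\<in>cliques V E S. key C = (\<nu>, j)}. h C)"
    using sum.group[OF finite_cliques _ image_subsetI, of _ key h] finite_classes[OF finite_S]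
    by (simp add: case_prod_unfold)
  also have "\<dots> =
      (\<Sum>\<nu>\<in>classes S (card S). \<Sum>j\<in>{1..card S + 1}. \<Sum>C\<in>cliques_at V E S (card S) \<sigma> \<nu> j. h C)"
    unfolding sum.cartesian_product cliques_at_def key_def by simp
  finally show ?thesis .
qed

lemma sum_cliques_by_class_location_count:
  fixes \<phi> :: "'a cls \<Rightarrow> nat \<Rightarrow> 'b::comm_semiring_1"
  assumes "respects_count V E S (card S) \<sigma> \<alpha>"
  shows "(\<Sum>C\<in>cliques V E S. \<phi> (clique_class E S (card S) C) (location S \<sigma> C)) =
    (\<Sum>\<nu>\<in>classes S (card S). \<Sum>j\<in>{1..card S + 1}. \<phi> \<nu> j * of_nat (\<alpha> \<nu> j))"
  unfolding sum_cliques_by_class_location[where \<sigma> = \<sigma>]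
proof (intro sum.cong refl)
  fix \<nu> j assume "\<nu> \<in> classes S (card S)" "j \<in> {1..card S + 1}"
  then show "(\<Sum>C\<in>cliques_at V E S (card S) \<sigma> \<nu> j. \<phi> (clique_class E S (card S) C) (location S \<sigma> C)) =
      \<phi> \<nu> j * of_nat (\<alpha> \<nu> j)"
    using assms unfolding respects_count_def cliques_at_def by (simp add: mult.commute)
qed

lemma sum_cliques_by_class_location_size:
  assumes "respects_size V E S (card S) \<sigma> \<beta>"
  shows "(\<Sum>C\<in>cliques V E S. \<phi> (clique_class E S (card S) C) (location S \<sigma> C) * card C) =
    (\<Sum>\<nu>\<in>classes S (card S). \<Sum>j\<in>{1..card S + 1}. \<phi> \<nu> j * \<beta> \<nu> j)"
  unfolding sum_cliques_by_class_location[where \<sigma> = \<sigma>]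
proof (intro sum.cong refl)
  fix \<nu> j assume "\<nu> \<in> classes S (card S)" "j \<in> {1..card S + 1}"
  have "(\<Sum>C\<in>cliques_at V E S (card S) \<sigma> \<nu> j. \<phi> (clique_class E S (card S) C) (location S \<sigma> C) * card C) =
      (\<Sum>C\<in>cliques_at V E S (card S) \<sigma> \<nu> j. \<phi> \<nu> j * card C)"
    unfolding cliques_at_def by (rule sum.cong) auto
  also have "\<dots> = \<phi> \<nu> j * (\<Sum>C\<in>cliques_at V E S (card S) \<sigma> \<nu> j. card C)"
    by (simp add: sum_distrib_left)
  also have "\<dots> = \<phi> \<nu> j * \<beta> \<nu> j"
    using assms \<open>\<nu> \<in> classes S (card S)\<close> \<open>j \<in> {1..card S + 1}\<close>
    unfolding respects_size_def by simp
  finally show "(\<Sum>C\<in>cliques_at V E S (card S) \<sigma> \<nu> j.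
      \<phi> (clique_class E S (card S) C) (location S \<sigma> C) * card C) = \<phi> \<nu> j * \<beta> \<nu> j" .
qed

lemma twice_sum_imb_vertex_outside_cover:
  assumes "clean V E S \<sigma>" "respects_count V E S (card S) \<sigma> \<alpha>"
  shows "2 * (\<Sum>v\<in>V - S. int (imb_vertex E \<sigma> v)) =
    (\<Sum>C\<in>cliques V E S. 2 * clique_imbalance (card C) 0) +
    (\<Sum>\<nu>\<in>classes S (card S). \<Sum>j\<in>{1..card S + 1}.
      class_excess (filter (\<lambda>x. x \<in> S) \<sigma>) \<nu> j * int (\<alpha> \<nu> j))"
proof -
  let ?L = "filter (\<lambda>x. x \<in> S) \<sigma>"
  have "\<forall>C\<in>cliques V E S. \<forall>D\<in>cliques V E S. C \<noteq> D \<longrightarrow> C \<inter> D = {}"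
    using cliques_disjoint unfolding pairwise_def disjnt_def by blast
  moreover have "\<forall>C\<in>cliques V E S. finite C"
    using finite_clique by blast
  ultimately have "(\<Sum>v\<in>V - S. int (imb_vertex E \<sigma> v)) = (\<Sum>C\<in>cliques V E S. \<Sum>v\<in>C. int (imb_vertex E \<sigma> v))"
    unfolding Union_cliques[symmetric] by (simp add: sum.Union_disjoint)
  then have "2 * (\<Sum>v\<in>V - S. int (imb_vertex E \<sigma> v)) = (\<Sum>C\<in>cliques V E S.
      2 * clique_imbalance (card C) (type_balance ?L (clique_type E S C) (location S \<sigma> C)))"
    using sum_imb_vertex_clique[OF assms(1)] by (simp add: sum_distrib_left)
  also have "\<dots> = (\<Sum>C\<in>cliques V E S. 2 * clique_imbalance (card C) 0 +
      class_excess ?L (clique_class E S (card S) C) (location S \<sigma> C))"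
    using twice_clique_imbalance_eq[OF finite_S] by simp
  also have "\<dots> = (\<Sum>C\<in>cliques V E S. 2 * clique_imbalance (card C) 0) +
      (\<Sum>\<nu>\<in>classes S (card S). \<Sum>j\<in>{1..card S + 1}. class_excess ?L \<nu> j * int (\<alpha> \<nu> j))"
    unfolding sum.distrib sum_cliques_by_class_location_count[OF assms(2)] ..
  finally show ?thesis .
qed

lemma card_neighbours_cover_vertex:
  assumes "s \<in> S" and side: "\<And>C u. C \<in> cliques V E S \<Longrightarrow> u \<in> C \<Longrightarrow> B u \<longleftrightarrow> b C"
  shows "card {u. E s u \<and> B u} = card {u\<in>S. E s u \<and> B u} +
    (\<Sum>C\<in>cliques V E S. of_bool (s \<in> clique_type E S C \<and> b C) * card C)"
proof -
  define \<C> where "\<C> = {C \<in> cliques V E S. s \<in> clique_type E S C \<and> b C}"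
  have neighbours: "{u. E s u \<and> B u} = {u\<in>S. E s u \<and> B u} \<union> \<Union>\<C>"
  proof (intro equalityI subsetI)
    fix u assume "u \<in> {u. E s u \<and> B u}"
    then show "u \<in> {u\<in>S. E s u \<and> B u} \<union> \<Union>\<C>"
      using cover_vertex_neighbours[OF assms(1)] side unfolding \<C>_def by blast
  next
    fix u assume "u \<in> {u\<in>S. E s u \<and> B u} \<union> \<Union>\<C>"
    then show "u \<in> {u. E s u \<and> B u}"
      using cover_vertex_neighbours[OF assms(1)] side unfolding \<C>_def by blast
  qed
  have "\<C> \<subseteq> cliques V E S"
    unfolding \<C>_def by blast
  then have "\<Union>\<C> \<subseteq> V - S" "card (\<Union>\<C>) = sum card \<C>"
    using clique_subset finite_clique pairwise_subset[OF cliques_disjoint]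
    by (blast, intro card_Union_disjoint) blast+
  have "card {u. E s u \<and> B u} = card {u\<in>S. E s u \<and> B u} + card (\<Union>\<C>)"
    unfolding neighbours
  proof (rule card_Un_disjoint)
    show "finite {u\<in>S. E s u \<and> B u}"
      using finite_S by simp
    show "finite (\<Union>\<C>)"
      using finite_subset[OF \<open>\<Union>\<C> \<subseteq> V - S\<close>] finite_V by blast
    show "{u\<in>S. E s u \<and> B u} \<inter> \<Union>\<C> = {}"
      using \<open>\<Union>\<C> \<subseteq> V - S\<close> by blast
  qed
  also have "card (\<Union>\<C>) = sum card \<C>"
    by fact
  also have "\<dots> = (\<Sum>C\<in>cliques V E S. of_bool (s \<in> clique_type E S C \<and> b C) * card C)"
    unfolding \<C>_def sum.inter_filter[OF finite_cliques] by (rule sum.cong) auto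
  finally show ?thesis .
qed

lemma card_NL_cover_vertex:
  assumes "clean V E S \<sigma>" "respects_size V E S (card S) \<sigma> \<beta>" "s \<in> S"
  shows "card (NL E \<sigma> s) = card {u\<in>S. E s u \<and> before (filter (\<lambda>x. x \<in> S) \<sigma>) u s} +
    (\<Sum>\<nu>\<in>classes S (card S). \<Sum>j\<in>{1..card S + 1}.
      of_bool (s \<in> class_type \<nu> \<and> s \<notin> cover_prefix (filter (\<lambda>x. x \<in> S) \<sigma>) j) * \<beta> \<nu> j)"
proof -
  have "card (NL E \<sigma> s) = card {u\<in>S. E s u \<and> before \<sigma> u s} + (\<Sum>C\<in>cliques V E S.
      of_bool (s \<in> clique_type E S C \<and> s \<notin> cover_before \<sigma> C) * card C)"
    unfolding NL_def using clique_before_cover_iff[OF assms(1) _ _ assms(3)]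
    by (intro card_neighbours_cover_vertex[OF assms(3)])
  also have "{u\<in>S. E s u \<and> before \<sigma> u s} = {u\<in>S. E s u \<and> before (filter (\<lambda>x. x \<in> S) \<sigma>) u s}"
    using before_filter_iff[OF clean_distinct[OF assms(1)], of "\<lambda>x. x \<in> S" _ s] assms(3) by auto
  also have "(\<Sum>C\<in>cliques V E S. of_bool (s \<in> clique_type E S C \<and> s \<notin> cover_before \<sigma> C) * card C) =
      (\<Sum>\<nu>\<in>classes S (card S). \<Sum>j\<in>{1..card S + 1}.
        of_bool (s \<in> class_type \<nu> \<and> s \<notin> cover_prefix (filter (\<lambda>x. x \<in> S) \<sigma>) j) * \<beta> \<nu> j)"
    using sum_cliques_by_class_location_size[OF assms(2),
        of "\<lambda>\<nu> j. of_bool (s \<in> class_type \<nu> \<and> s \<notin> cover_prefix (filter (\<lambda>x. x \<in> S) \<sigma>) j)"]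
    unfolding cover_before_def by (simp only: class_type_clique_class)
  finally show ?thesis .
qed

lemma card_NR_cover_vertex:
  assumes "clean V E S \<sigma>" "respects_size V E S (card S) \<sigma> \<beta>" "s \<in> S"
  shows "card (NR E \<sigma> s) = card {u\<in>S. E s u \<and> before (filter (\<lambda>x. x \<in> S) \<sigma>) s u} +
    (\<Sum>\<nu>\<in>classes S (card S). \<Sum>j\<in>{1..card S + 1}.
      of_bool (s \<in> class_type \<nu> \<and> s \<in> cover_prefix (filter (\<lambda>x. x \<in> S) \<sigma>) j) * \<beta> \<nu> j)"
proof -
  have "card (NR E \<sigma> s) = card {u\<in>S. E s u \<and> before \<sigma> s u} + (\<Sum>C\<in>cliques V E S.
      of_bool (s \<in> clique_type E S C \<and> s \<in> cover_before \<sigma> C) * card C)"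
    unfolding NR_def using cover_before_clique_iff[OF assms(1) _ _ assms(3)]
    by (intro card_neighbours_cover_vertex[OF assms(3)])
  also have "{u\<in>S. E s u \<and> before \<sigma> s u} = {u\<in>S. E s u \<and> before (filter (\<lambda>x. x \<in> S) \<sigma>) s u}"
    using before_filter_iff[OF clean_distinct[OF assms(1)], of "\<lambda>x. x \<in> S" s] assms(3) by auto
  also have "(\<Sum>C\<in>cliques V E S. of_bool (s \<in> clique_type E S C \<and> s \<in> cover_before \<sigma> C) * card C) =
      (\<Sum>\<nu>\<in>classes S (card S). \<Sum>j\<in>{1..card S + 1}.
        of_bool (s \<in> class_type \<nu> \<and> s \<in> cover_prefix (filter (\<lambda>x. x \<in> S) \<sigma>) j) * \<beta> \<nu> j)"
    using sum_cliques_by_class_location_size[OF assms(2),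
        of "\<lambda>\<nu> j. of_bool (s \<in> class_type \<nu> \<and> s \<in> cover_prefix (filter (\<lambda>x. x \<in> S) \<sigma>) j)"]
    unfolding cover_before_def by (simp only: class_type_clique_class)
  finally show ?thesis .
qed

lemma imb_vertex_cover_eq:
  assumes "clean V E S \<sigma>" "clean V E S \<pi>" "similar S \<sigma> \<pi>"
    and "respects_size V E S (card S) \<sigma> \<beta>" "respects_size V E S (card S) \<pi> \<beta>" "s \<in> S"
  shows "imb_vertex E \<sigma> s = imb_vertex E \<pi> s"
  unfolding imb_vertex_def card_NL_cover_vertex[OF assms(1,4,6)] card_NR_cover_vertex[OF assms(1,4,6)]
    card_NL_cover_vertex[OF assms(2,5,6)] card_NR_cover_vertex[OF assms(2,5,6)]
  using assms(3) unfolding similar_def by simp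

lemma sum_imb_vertex_outside_cover_eq:
  assumes "clean V E S \<sigma>" "clean V E S \<pi>" "similar S \<sigma> \<pi>"
    and "respects_count V E S (card S) \<sigma> \<alpha>" "respects_count V E S (card S) \<pi> \<alpha>"
  shows "(\<Sum>v\<in>V - S. imb_vertex E \<sigma> v) = (\<Sum>v\<in>V - S. imb_vertex E \<pi> v)"
proof -
  have "2 * (\<Sum>v\<in>V - S. int (imb_vertex E \<sigma> v)) = 2 * (\<Sum>v\<in>V - S. int (imb_vertex E \<pi> v))"
    unfolding twice_sum_imb_vertex_outside_cover[OF assms(1,4)]
      twice_sum_imb_vertex_outside_cover[OF assms(2,5)]
    using assms(3) unfolding similar_def by simp
  then show ?thesis
    by (simp flip: of_nat_sum)
qed

end

theorem lemma3:
  fixes V :: "'a set" and E :: "'a \<Rightarrow> 'a \<Rightarrow> bool" and S :: "'a set" and k :: nat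
    and \<alpha> \<beta> :: "'a cls \<Rightarrow> nat \<Rightarrow> nat" and \<sigma> \<pi> :: "'a list"
  assumes "graph V E"
    and "twin_cover V E S" and "card S = k"
    and "spec_fun V S k \<alpha>" and "spec_fun V S k \<beta>"
    and "clean V E S \<sigma>" and "clean V E S \<pi>"
    and "similar S \<sigma> \<pi>"
    and "respects_count V E S k \<sigma> \<alpha>" and "respects_size V E S k \<sigma> \<beta>"
    and "respects_count V E S k \<pi> \<alpha>" and "respects_size V E S k \<pi> \<beta>"
  shows "imbalance V E \<sigma> = imbalance V E \<pi>"
proof -
  interpret twin_cover_graph V E S
    using assms(1,2) by unfold_locales
  have split: "imbalance V E \<tau> = (\<Sum>v\<in>V - S. imb_vertex E \<tau> v) + (\<Sum>s\<in>S. imb_vertex E \<tau> s)" for \<tau>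
    unfolding imbalance_def using sum.subset_diff[OF S_subset_V finite_V] .
  have "(\<Sum>s\<in>S. imb_vertex E \<sigma> s) = (\<Sum>s\<in>S. imb_vertex E \<pi> s)"
    using imb_vertex_cover_eq[OF assms(6-8)] assms(3,10,12) by simp
  moreover have "(\<Sum>v\<in>V - S. imb_vertex E \<sigma> v) = (\<Sum>v\<in>V - S. imb_vertex E \<pi> v)"
    using sum_imb_vertex_outside_cover_eq[OF assms(6-8)] assms(3,9,11) by simp
  ultimately show ?thesis
    unfolding split by simp
qed

end
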